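(* Let $q(x)=\sum_{i=1}^nq_i(x_i)$, where each $q_i:\mathbb{R}\to\mathbb{R}\cup\{+\infty\}$ is proper, convex and lower semicontinuous and $\mathrm{gph}\,\partial q_i$ is the polygonal line in $\mathbb{R}^2$ connecting successively the points $(\xi^i_1,-\infty),(\xi^i_1,\eta^i_1),(\xi^i_2,\eta^i_2),\dots,(\xi^i_{2m_i},\eta^i_{2m_i}),(\xi^i_{2m_i},+\infty)$ for some integer $m_i\ge1$, where $\Delta\xi^i_j:=\xi^i_{j+1}-\xi^i_j>0$ for odd $j$, $\Delta\xi^i_j=0$ for even $j$, $\Delta\eta^i_j:=\eta^i_{j+1}-\eta^i_j\ge0$ for odd $j$ and $\Delta\eta^i_j>0$ for even $j$. Let $(x,x^* )\in\mathrm{gph}\,\partial q$, set $\mathcal{A}_i=\{\xi^i_1\}\cup\{\xi^i_{2m_i}\}\cup\{\xi^i_j:\Delta\xi^i_j=0\}$, and let $G$ be the $n\times n$ diagonal matrix with \[G_{ii}=\begin{cases}1&\text{if }x_i\in\mathcal{A}_i,\\ \dfrac{\Delta\eta^i_j}{\Delta\xi^i_j+\Delta\eta^i_j}&\text{if }x_i\in[\xi^i_j,\xi^i_{j+1}]\setminus\mathcal{A}_i\text{ and }j\in\{1,\dots,2m_i\}\text{ is odd},\end{cases}\qquad i=1,\dots,n.\] Then $G$ is positive semidefinite, $\|G\|\le1$, and $\{((I-G)v^*,Gv^* ):v^*\in\mathbb{R}^n\}\subset\mathrm{gph}\, D^*(\partial q)(x,x^* )$.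
   Context: $\partial$ denotes the convex subdifferential. The polygonal line consists of the vertical ray from $(\xi^i_1,-\infty)$ to $(\xi^i_1,\eta^i_1)$, the segments between consecutive listed points, and the vertical ray from $(\xi^i_{2m_i},\eta^i_{2m_i})$ upward. $D^*$ is the limiting (Mordukhovich) coderivative: $D^*F(\bar x,\bar y)(v^* )=\{u^*:(u^*,-v^* )\in N_{\mathrm{gph}\, F}(\bar x,\bar y)\}$ with $N$ the limiting normal cone (limits of regular normals, the regular normal cone being the polar of the contingent cone), and $\mathrm{gph}\, D^*F(\bar x,\bar y)=\{(v^*,u^* ):u^*\in D^*F(\bar x,\bar y)(v^* )\}$. $\|G\|$ is the spectral norm. *)

theory Defs
  imports "HOL-Analysis.Analysis"
begin

definition proper_fun :: "('a \<Rightarrow> ereal) \<Rightarrow> bool" where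
  "proper_fun f \<longleftrightarrow> (\<forall>x. f x \<noteq> -\<infinity>) \<and> (\<exists>x. f x \<noteq> \<infinity>)"

definition convex_fun :: "('a::real_vector \<Rightarrow> ereal) \<Rightarrow> bool" where
  "convex_fun f \<longleftrightarrow> convex {(x, r::real). f x \<le> ereal r}"

definition lsc_fun :: "('a::topological_space \<Rightarrow> ereal) \<Rightarrow> bool" where
  "lsc_fun f \<longleftrightarrow> (\<forall>x. f x \<le> Liminf (at x) f)"

definition subdiff :: "('a::real_inner \<Rightarrow> ereal) \<Rightarrow> 'a \<Rightarrow> 'a set" where
  "subdiff f x = {s. \<bar>f x\<bar> \<noteq> \<infinity> \<and> (\<forall>y. f x + ereal (s \<bullet> (y - x)) \<le> f y)}"

definition gph_subdiff :: "('a::real_inner \<Rightarrow> ereal) \<Rightarrow> ('a \<times> 'a) set" where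
  "gph_subdiff f = {(x, s). s \<in> subdiff f x}"

definition contingent_cone :: "'a::real_normed_vector set \<Rightarrow> 'a \<Rightarrow> 'a set" where
  "contingent_cone C x = {w. \<exists>t u. (\<forall>k. t k > 0 \<and> x + t k *\<^sub>R u k \<in> C) \<and>
      t \<longlonglongrightarrow> 0 \<and> u \<longlonglongrightarrow> w}"

definition regular_normal_cone :: "'a::real_inner set \<Rightarrow> 'a \<Rightarrow> 'a set" where
  "regular_normal_cone C x =
     (if x \<in> C then {v. \<forall>w\<in>contingent_cone C x. v \<bullet> w \<le> 0} else {})"

definition limiting_normal_cone :: "'a::real_inner set \<Rightarrow> 'a \<Rightarrow> 'a set" where
  "limiting_normal_cone C x = {v. \<exists>xs vs. (\<forall>k. xs k \<in> C \<and> vs k \<in> regular_normal_cone C (xs k)) \<and>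
      xs \<longlonglongrightarrow> x \<and> vs \<longlonglongrightarrow> v}"

definition coderivative :: "('a::real_inner \<times> 'b::real_inner) set \<Rightarrow> 'a \<Rightarrow> 'b \<Rightarrow> 'b \<Rightarrow> 'a set" where
  "coderivative gph x y v = {u. (u, - v) \<in> limiting_normal_cone gph (x, y)}"

definition gph_coderivative :: "('a::real_inner \<times> 'b::real_inner) set \<Rightarrow> 'a \<Rightarrow> 'b \<Rightarrow> ('b \<times> 'a) set" where
  "gph_coderivative gph x y = {(v, u). u \<in> coderivative gph x y v}"

definition polygonal_line :: "(nat \<Rightarrow> real) \<Rightarrow> (nat \<Rightarrow> real) \<Rightarrow> nat \<Rightarrow> (real \<times> real) set" where
  "polygonal_line \<xi> \<eta> m =
     {(\<xi> 1, t) | t. t \<le> \<eta> 1}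
     \<union> (\<Union>j\<in>{1..<2*m}. closed_segment (\<xi> j, \<eta> j) (\<xi> (Suc j), \<eta> (Suc j)))
     \<union> {(\<xi> (2*m), t) | t. \<eta> (2*m) \<le> t}"

definition psd_matrix :: "real^'n^'n \<Rightarrow> bool" where
  "psd_matrix G \<longleftrightarrow> transpose G = G \<and> (\<forall>v. 0 \<le> v \<bullet> (G *v v))"

definition spectral_norm :: "real^'n^'n \<Rightarrow> real" where
  "spectral_norm G = onorm (\<lambda>v. G *v v)"

end

theory Submission
  imports Defs
begin

(* Since the subdifferential of the separable sum q is the product of the subdifferentials of
   the q_i, the graph of \<partial>q is the product of the polygonal graphs of the \<partial>q_i.
   Every point (x_i, x^*_i) of such a graph is a limit of points near which the graph is a
   straight line with normal (G_ii, G_ii - 1): on an oblique segment this is the point itself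
   and G_ii is read off the slope; at an abscissa in A_i these are points in the interior of an
   adjacent vertical piece, and G_ii = 1. Near the corresponding product points the graph of \<partial>q
   is orthogonal to the pair of G v^* and -(I - G) v^*, which is therefore a regular normal there
   and, in the limit, a limiting normal at the given point of the graph. *)

definition locally_orthogonal :: "'a::real_inner set \<Rightarrow> 'a \<Rightarrow> 'a \<Rightarrow> bool" where
  "locally_orthogonal C n p \<longleftrightarrow> p \<in> C \<and> (\<exists>r>0. \<forall>z\<in>C. dist z p < r \<longrightarrow> n \<bullet> (z - p) = 0)"

lemma locally_orthogonal_scaleR:
  "locally_orthogonal C n p \<Longrightarrow> locally_orthogonal C (c *\<^sub>R n) p"
  unfolding locally_orthogonal_def by auto

lemma locally_orthogonal_imp_regular_normal:
  assumes "locally_orthogonal C n p"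
  shows "n \<in> regular_normal_cone C p"
proof -
  obtain r where "p \<in> C" "r > 0" and flat: "\<And>z. z \<in> C \<Longrightarrow> dist z p < r \<Longrightarrow> n \<bullet> (z - p) = 0"
    using assms unfolding locally_orthogonal_def by blast
  have "n \<bullet> w = 0" if w: "w \<in> contingent_cone C p" for w
  proof -
    obtain t u where tu: "\<forall>k. t k > 0 \<and> p + t k *\<^sub>R u k \<in> C" "t \<longlonglongrightarrow> 0" "u \<longlonglongrightarrow> w"
      using w unfolding contingent_cone_def by blast
    have "(\<lambda>k. t k *\<^sub>R u k) \<longlonglongrightarrow> 0 *\<^sub>R w"
      using tu by (intro tendsto_scaleR)
    then have "eventually (\<lambda>k. norm (t k *\<^sub>R u k) < r) sequentially"
      using \<open>r > 0\<close> by (simp add: tendsto_iff)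
    then have ev: "eventually (\<lambda>k. n \<bullet> u k = 0) sequentially"
    proof (rule eventually_mono)
      fix k assume "norm (t k *\<^sub>R u k) < r"
      then have "t k * (n \<bullet> u k) = 0"
        using flat[of "p + t k *\<^sub>R u k"] tu(1) by (simp add: dist_norm)
      then show "n \<bullet> u k = 0"
        using tu(1) by (metis mult_eq_0_iff order_less_irrefl)
    qed
    have "(\<lambda>k. n \<bullet> u k) \<longlonglongrightarrow> n \<bullet> w"
      using tu(3) by (intro tendsto_intros)
    then have "(\<lambda>k. 0) \<longlonglongrightarrow> n \<bullet> w"
      using ev by (rule Lim_transform_eventually)
    then show ?thesis
      by (simp add: LIMSEQ_const_iff)
  qed
  then show ?thesis
    unfolding regular_normal_cone_def using \<open>p \<in> C\<close> by auto
qed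

lemma closure_locally_orthogonal_imp_limiting_normal:
  assumes "p \<in> closure {z. locally_orthogonal C n z}"
  shows "n \<in> limiting_normal_cone C p"
proof -
  obtain ps where "\<And>k. locally_orthogonal C n (ps k)" "ps \<longlonglongrightarrow> p"
    using assms unfolding closure_sequential by blast
  then show ?thesis
    unfolding limiting_normal_cone_def
    by (intro CollectI exI[of _ ps] exI[of _ "\<lambda>_. n"])
       (auto simp: locally_orthogonal_def locally_orthogonal_imp_regular_normal)
qed

lemma dist_Pair_vec_nth_le:
  fixes y s y' s' :: "real^'n"
  shows "dist (y $ i, s $ i) (y' $ i, s' $ i) \<le> dist (y, s) (y', s')"
  unfolding dist_Pair_Pair
  by (intro real_sqrt_le_mono add_mono power_mono dist_vec_nth_le) auto

lemma locally_orthogonal_coordinatewise: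
  fixes y s u w :: "real^'n::finite"
  assumes "\<And>i. locally_orthogonal (P i) (u $ i, w $ i) (y $ i, s $ i)"
  shows "locally_orthogonal {(y, s). \<forall>i. (y $ i, s $ i) \<in> P i} (u, w) (y, s)"
proof -
  have "\<forall>i. \<exists>r>0. \<forall>z\<in>P i. dist z (y $ i, s $ i) < r \<longrightarrow> (u $ i, w $ i) \<bullet> (z - (y $ i, s $ i)) = 0"
    using assms unfolding locally_orthogonal_def by blast
  then obtain r where r: "\<And>i. r i > 0"
    and flat: "\<And>i z. z \<in> P i \<Longrightarrow> dist z (y $ i, s $ i) < r i \<Longrightarrow> (u $ i, w $ i) \<bullet> (z - (y $ i, s $ i)) = 0"
    by metis
  define \<rho> where "\<rho> = Min (range r)"
  have "\<rho> > 0"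
    using r by (simp add: \<rho>_def)
  have "(u, w) \<bullet> ((y', s') - (y, s)) = 0"
    if "\<forall>i. (y' $ i, s' $ i) \<in> P i" "dist (y', s') (y, s) < \<rho>" for y' s'
  proof -
    have "(u $ i, w $ i) \<bullet> ((y' $ i, s' $ i) - (y $ i, s $ i)) = 0" for i
    proof (rule flat)
      have "\<rho> \<le> r i"
        unfolding \<rho>_def by (rule Min_le) auto
      then show "dist (y' $ i, s' $ i) (y $ i, s $ i) < r i"
        using dist_Pair_vec_nth_le[of y' i s' y s] that(2) by linarith
    qed (use that in simp)
    then show ?thesis
      by (simp add: inner_vec_def sum.distrib[symmetric] algebra_simps)
  qed
  then show ?thesis
    using assms \<open>\<rho> > 0\<close> unfolding locally_orthogonal_def by fast
qed

lemma closure_locally_orthogonal_coordinatewise: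
  fixes y s u w :: "real^'n::finite"
  assumes "\<And>i. (y $ i, s $ i) \<in> closure {z. locally_orthogonal (P i) (u $ i, w $ i) z}"
  shows "(y, s) \<in> closure {z. locally_orthogonal {(y, s). \<forall>i. (y $ i, s $ i) \<in> P i} (u, w) z}"
proof -
  have "\<forall>i. \<exists>g. (\<forall>k. locally_orthogonal (P i) (u $ i, w $ i) (g k)) \<and> g \<longlonglongrightarrow> (y $ i, s $ i)"
    using assms unfolding closure_sequential by auto
  then obtain f where f: "\<And>i k. locally_orthogonal (P i) (u $ i, w $ i) (f i k)"
    and lim: "\<And>i. f i \<longlonglongrightarrow> (y $ i, s $ i)"
    by metis
  define ys where "ys k = (\<chi> i. fst (f i k))" for k
  define ss where "ss k = (\<chi> i. snd (f i k))" for k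
  have "locally_orthogonal {(y, s). \<forall>i. (y $ i, s $ i) \<in> P i} (u, w) (ys k, ss k)" for k
    using f by (intro locally_orthogonal_coordinatewise) (simp add: ys_def ss_def)
  moreover have "(\<lambda>k. (ys k, ss k)) \<longlonglongrightarrow> (y, s)"
    unfolding ys_def ss_def
    by (intro tendsto_Pair vec_tendstoI) (use tendsto_fst[OF lim] tendsto_snd[OF lim] in auto)
  ultimately show ?thesis
    unfolding closure_sequential mem_Collect_eq by (intro exI[of _ "\<lambda>k. (ys k, ss k)"]) simp
qed

lemma closure_locally_orthogonal_vertical:
  fixes P :: "(real \<times> real) set"
  assumes "open I" and in_P: "\<And>b. b \<in> I \<Longrightarrow> (c, b) \<in> P"
    and vertical: "\<And>a b. (a, b) \<in> P \<Longrightarrow> b \<in> I \<Longrightarrow> a = c" and "b0 \<in> closure I"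
  shows "(c, b0) \<in> closure {p. locally_orthogonal P (1, 0) p}"
proof -
  have "locally_orthogonal P (1, 0) (c, b)" if "b \<in> I" for b
  proof -
    obtain r where "r > 0" "ball b r \<subseteq> I"
      using \<open>open I\<close> \<open>b \<in> I\<close> open_contains_ball by blast
    have "(1, 0) \<bullet> (z - (c, b)) = 0" if "z \<in> P" "dist z (c, b) < r" for z
    proof -
      obtain a' b' where z: "z = (a', b')"
        by (cases z)
      have "dist b' b < r"
        using dist_snd_le[of z "(c, b)"] that(2) by (simp add: z)
      then have "b' \<in> I"
        using \<open>ball b r \<subseteq> I\<close> by (auto simp: dist_commute)
      then have "a' = c"
        using vertical that(1) z by blast
      then show ?thesis
        by (simp add: z)
    qed
    then show ?thesis
      unfolding locally_orthogonal_def using in_P[OF \<open>b \<in> I\<close>] \<open>r > 0\<close> by blast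
  qed
  then have "{c} \<times> I \<subseteq> {p. locally_orthogonal P (1, 0) p}"
    by auto
  then have "closure ({c} \<times> I) \<subseteq> closure {p. locally_orthogonal P (1, 0) p}"
    by (rule closure_mono)
  moreover have "(c, b0) \<in> closure ({c} \<times> I)"
    using \<open>b0 \<in> closure I\<close> by (simp add: closure_Times)
  ultimately show ?thesis
    by blast
qed

lemma subdiff_separable_sum_nth:
  fixes q :: "'n::finite \<Rightarrow> real \<Rightarrow> ereal"
  assumes s: "s \<in> subdiff (\<lambda>y. \<Sum>i\<in>UNIV. q i (y $ i)) y"
    and not_minf: "\<And>i t. q i t \<noteq> -\<infinity>"
  shows "s $ i \<in> subdiff (q i) (y $ i)"
proof -
  have fin: "\<bar>\<Sum>k\<in>UNIV. q k (y $ k)\<bar> \<noteq> \<infinity>"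
    and ineq: "\<And>y'. (\<Sum>k\<in>UNIV. q k (y $ k)) + ereal (s \<bullet> (y' - y)) \<le> (\<Sum>k\<in>UNIV. q k (y' $ k))"
    using s unfolding subdiff_def by auto
  define c where "c k = real_of_ereal (q k (y $ k))" for k
  have "\<bar>q k (y $ k)\<bar> \<noteq> \<infinity>" for k
    using fin sum_Inf[of "\<lambda>k. q k (y $ k)" UNIV] by auto
  then have qc: "\<And>k. q k (y $ k) = ereal (c k)"
    unfolding c_def by (simp add: ereal_real')
  define R where "R = (\<Sum>k\<in>UNIV - {i}. c k)"
  have "q i (y $ i) + ereal (s $ i * (t - y $ i)) \<le> q i t" for t
  proof -
    define y' where "y' = (\<chi> k. if k = i then t else y $ k)"
    have "s $ k * (y' - y) $ k = (if k = i then s $ i * (t - y $ i) else 0)" for k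
      by (simp add: y'_def)
    then have "s \<bullet> (y' - y) = s $ i * (t - y $ i)"
      unfolding inner_vec_def inner_real_def by simp
    moreover have "(\<Sum>k\<in>UNIV. q k (y $ k)) = ereal (c i) + ereal R"
      unfolding R_def qc by (simp add: sum.remove[of UNIV i])
    moreover have "(\<Sum>k\<in>UNIV. q k (y' $ k)) = q i t + ereal R"
    proof -
      have "(\<Sum>k\<in>UNIV - {i}. q k (y' $ k)) = (\<Sum>k\<in>UNIV - {i}. ereal (c k))"
        by (rule sum.cong) (auto simp: y'_def qc)
      then show ?thesis
        by (simp add: sum.remove[of UNIV i] y'_def R_def)
    qed
    ultimately have "ereal (c i) + ereal R + ereal (s $ i * (t - y $ i)) \<le> q i t + ereal R"
      using ineq[of y'] by simp
    then show ?thesis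
      using qc[of i] not_minf[of i t] by (cases "q i t") auto
  qed
  then show ?thesis
    unfolding subdiff_def using qc[of i] by simp
qed

lemma subdiff_separable_sumI:
  fixes q :: "'n::finite \<Rightarrow> real \<Rightarrow> ereal"
  assumes s: "\<And>i. s $ i \<in> subdiff (q i) (y $ i)"
  shows "s \<in> subdiff (\<lambda>y. \<Sum>i\<in>UNIV. q i (y $ i)) y"
proof -
  have fin: "\<bar>q k (y $ k)\<bar> \<noteq> \<infinity>" and ik: "\<And>t. q k (y $ k) + ereal (s $ k * (t - y $ k)) \<le> q k t" for k
    using s[of k] unfolding subdiff_def by auto
  define c where "c k = real_of_ereal (q k (y $ k))" for k
  have qc: "\<And>k. q k (y $ k) = ereal (c k)"
    unfolding c_def using fin by (simp add: ereal_real')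
  have "(\<Sum>i\<in>UNIV. q i (y $ i)) + ereal (s \<bullet> (y' - y)) \<le> (\<Sum>i\<in>UNIV. q i (y' $ i))" for y'
  proof -
    have "(\<Sum>i\<in>UNIV. q i (y $ i)) + ereal (s \<bullet> (y' - y))
        = (\<Sum>i\<in>UNIV. q i (y $ i) + ereal (s $ i * (y' $ i - y $ i)))"
      unfolding qc inner_vec_def by (simp add: sum.distrib)
    also have "\<dots> \<le> (\<Sum>i\<in>UNIV. q i (y' $ i))"
      by (rule sum_mono) (rule ik)
    finally show ?thesis .
  qed
  then show ?thesis
    unfolding subdiff_def by (simp add: qc)
qed

lemma gph_subdiff_separable_sum:
  fixes q :: "'n::finite \<Rightarrow> real \<Rightarrow> ereal"
  assumes "\<And>i t. q i t \<noteq> -\<infinity>"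
  shows "gph_subdiff (\<lambda>y. \<Sum>i\<in>UNIV. q i (y $ i)) = {(y, s). \<forall>i. (y $ i, s $ i) \<in> gph_subdiff (q i)}"
  unfolding gph_subdiff_def
  using subdiff_separable_sum_nth[where q = q, OF _ assms] subdiff_separable_sumI by blast

lemma diagonal_matrix_vector_mult:
  fixes G :: "real^'n^'n"
  assumes "\<And>i k. i \<noteq> k \<Longrightarrow> G $ i $ k = 0"
  shows "G *v v = (\<chi> i. G $ i $ i * v $ i)"
proof -
  have "(\<Sum>k\<in>UNIV. G $ i $ k * v $ k) = (\<Sum>k\<in>UNIV. if k = i then G $ i $ i * v $ i else 0)" for i
    using assms by (intro sum.cong) auto
  then show ?thesis
    by (simp add: vec_eq_iff matrix_vector_mult_def)
qed

lemma psd_matrix_diagonal: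
  fixes G :: "real^'n^'n"
  assumes diag: "\<And>i k. i \<noteq> k \<Longrightarrow> G $ i $ k = 0" and nonneg: "\<And>i. 0 \<le> G $ i $ i"
  shows "psd_matrix G"
proof -
  have "G $ k $ i = G $ i $ k" for i k
    using diag by (cases "i = k") auto
  then have "transpose G = G"
    by (simp add: vec_eq_iff transpose_def)
  have Gv: "G *v v = (\<chi> i. G $ i $ i * v $ i)" for v
    using diag by (rule diagonal_matrix_vector_mult)
  have sq: "v $ i * (G $ i $ i * v $ i) = G $ i $ i * (v $ i)\<^sup>2" for v i
    by (simp add: power2_eq_square)
  have "0 \<le> v \<bullet> (G *v v)" for v
    unfolding Gv inner_vec_def inner_real_def vec_lambda_beta sq
    by (intro sum_nonneg mult_nonneg_nonneg nonneg zero_le_power2)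
  with \<open>transpose G = G\<close> show ?thesis
    unfolding psd_matrix_def by blast
qed

lemma spectral_norm_diagonal_le:
  fixes G :: "real^'n^'n"
  assumes diag: "\<And>i k. i \<noteq> k \<Longrightarrow> G $ i $ k = 0" and bound: "\<And>i. \<bar>G $ i $ i\<bar> \<le> c"
  shows "spectral_norm G \<le> c"
  unfolding spectral_norm_def
proof (rule onorm_le)
  fix v :: "real^'n"
  have Gv: "G *v v = (\<chi> i. G $ i $ i * v $ i)"
    using diag by (rule diagonal_matrix_vector_mult)
  have "c \<ge> 0"
    using bound abs_ge_zero order.trans by blast
  have "(G *v v) \<bullet> (G *v v) \<le> (c *\<^sub>R v) \<bullet> (c *\<^sub>R v)"
    unfolding Gv inner_vec_def
  proof (rule sum_mono)
    fix i
    have "(G $ i $ i)\<^sup>2 \<le> c\<^sup>2"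
      using power_mono[OF bound[of i] abs_ge_zero, of 2] by simp
    then have "(G $ i $ i * v $ i)\<^sup>2 \<le> (c * v $ i)\<^sup>2"
      by (simp add: power_mult_distrib mult_right_mono)
    then show "(\<chi> i. G $ i $ i * v $ i) $ i \<bullet> (\<chi> i. G $ i $ i * v $ i) $ i \<le> (c *\<^sub>R v) $ i \<bullet> (c *\<^sub>R v) $ i"
      by (simp add: power2_eq_square)
  qed
  then have "norm (G *v v) \<le> norm (c *\<^sub>R v)"
    by (simp only: norm_le)
  then show "norm (G *v v) \<le> c * norm v"
    using \<open>c \<ge> 0\<close> by simp
qed

lemma diagonal_pairs_in_gph_coderivative:
  fixes G :: "real^'n::finite^'n" and P :: "'n \<Rightarrow> (real \<times> real) set"
  assumes diag: "\<And>i k. i \<noteq> k \<Longrightarrow> G $ i $ k = 0"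
    and approx: "\<And>i. (x $ i, xs $ i) \<in> closure {p. locally_orthogonal (P i) (G $ i $ i, G $ i $ i - 1) p}"
  shows "((mat 1 - G) *v v, G *v v) \<in> gph_coderivative {(y, s). \<forall>i. (y $ i, s $ i) \<in> P i} x xs"
proof -
  have Gv: "G *v v = (\<chi> i. G $ i $ i * v $ i)"
    using diag by (rule diagonal_matrix_vector_mult)
  have "(mat 1 - G) *v v = (\<chi> i. (mat 1 - G) $ i $ i * v $ i)"
    using diag by (intro diagonal_matrix_vector_mult) (simp add: mat_def)
  then have IGv: "(mat 1 - G) *v v = (\<chi> i. (1 - G $ i $ i) * v $ i)"
    by (simp add: mat_def)
  have normal: "((G *v v) $ i, (- ((mat 1 - G) *v v)) $ i) = v $ i *\<^sub>R (G $ i $ i, G $ i $ i - 1)" for i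
    by (simp add: Gv IGv algebra_simps)
  have "{p. locally_orthogonal (P i) (G $ i $ i, G $ i $ i - 1) p}
      \<subseteq> {p. locally_orthogonal (P i) ((G *v v) $ i, (- ((mat 1 - G) *v v)) $ i) p}" for i
    unfolding normal using locally_orthogonal_scaleR by blast
  then have "(x $ i, xs $ i) \<in> closure {p. locally_orthogonal (P i) ((G *v v) $ i, (- ((mat 1 - G) *v v)) $ i) p}"
    for i
    using approx closure_mono by blast
  then have "(x, xs) \<in> closure {z. locally_orthogonal {(y, s). \<forall>i. (y $ i, s $ i) \<in> P i} (G *v v, - ((mat 1 - G) *v v)) z}"
    by (rule closure_locally_orthogonal_coordinatewise)
  then show ?thesis
    unfolding gph_coderivative_def coderivative_def
    by (simp add: closure_locally_orthogonal_imp_limiting_normal)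
qed

definition vertical_abscissae :: "(nat \<Rightarrow> real) \<Rightarrow> nat \<Rightarrow> real set" where
  "vertical_abscissae \<xi> m = {\<xi> 1, \<xi> (2 * m)} \<union> {\<xi> j | j. j \<in> {1..<2 * m} \<and> \<xi> (Suc j) - \<xi> j = 0}"

locale staircase =
  fixes \<xi> \<eta> :: "nat \<Rightarrow> real" and m :: nat
  assumes m_pos: "1 \<le> m"
    and dxi_odd: "\<And>j. j \<in> {1..<2 * m} \<Longrightarrow> odd j \<Longrightarrow> \<xi> (Suc j) - \<xi> j > 0"
    and dxi_even: "\<And>j. j \<in> {1..<2 * m} \<Longrightarrow> even j \<Longrightarrow> \<xi> (Suc j) - \<xi> j = 0"
    and deta_odd: "\<And>j. j \<in> {1..<2 * m} \<Longrightarrow> odd j \<Longrightarrow> \<eta> (Suc j) - \<eta> j \<ge> 0"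
    and deta_even: "\<And>j. j \<in> {1..<2 * m} \<Longrightarrow> even j \<Longrightarrow> \<eta> (Suc j) - \<eta> j > 0"
begin

abbreviation "P \<equiv> polygonal_line \<xi> \<eta> m"

lemma xi_Suc_ge: "j \<in> {1..<2 * m} \<Longrightarrow> \<xi> j \<le> \<xi> (Suc j)"
  using dxi_odd[of j] dxi_even[of j] by (cases "odd j") auto

lemma eta_Suc_ge: "j \<in> {1..<2 * m} \<Longrightarrow> \<eta> j \<le> \<eta> (Suc j)"
  using deta_odd[of j] deta_even[of j] by (cases "odd j") auto

lemma xi_mono: "1 \<le> l \<Longrightarrow> l \<le> l' \<Longrightarrow> l' \<le> 2 * m \<Longrightarrow> \<xi> l \<le> \<xi> l'"
  by (rule lift_Suc_mono_le_ivl[where f = \<xi> and N = "{1..<2 * m}", OF xi_Suc_ge]) auto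

lemma eta_mono: "1 \<le> l \<Longrightarrow> l \<le> l' \<Longrightarrow> l' \<le> 2 * m \<Longrightarrow> \<eta> l \<le> \<eta> l'"
  by (rule lift_Suc_mono_le_ivl[where f = \<eta> and N = "{1..<2 * m}", OF eta_Suc_ge]) auto

lemma xi_less: "1 \<le> l \<Longrightarrow> l < l' \<Longrightarrow> l' \<le> 2 * m \<Longrightarrow> odd l \<Longrightarrow> \<xi> l < \<xi> l'"
  using dxi_odd[of l] xi_mono[of "Suc l" l'] by force

lemma polygonal_line_cases:
  assumes "(a, b) \<in> P"
  obtains (first_ray) "a = \<xi> 1" "b \<le> \<eta> 1"
  | (last_ray) "a = \<xi> (2 * m)" "\<eta> (2 * m) \<le> b"
  | (segment) l u where "l \<in> {1..<2 * m}" "u \<in> {0..1}"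
      "a = \<xi> l + u * (\<xi> (Suc l) - \<xi> l)" "b = \<eta> l + u * (\<eta> (Suc l) - \<eta> l)"
proof -
  consider "a = \<xi> 1 \<and> b \<le> \<eta> 1" | "a = \<xi> (2 * m) \<and> \<eta> (2 * m) \<le> b"
    | l where "l \<in> {1..<2 * m}" "(a, b) \<in> closed_segment (\<xi> l, \<eta> l) (\<xi> (Suc l), \<eta> (Suc l))"
    using assms unfolding polygonal_line_def by blast
  then show ?thesis
  proof cases
    case 3
    then obtain u where "u \<in> {0..1}"
      "(a, b) = (1 - u) *\<^sub>R (\<xi> l, \<eta> l) + u *\<^sub>R (\<xi> (Suc l), \<eta> (Suc l))"
      unfolding closed_segment_def by auto
    then show ?thesis
      using segment[of l u] 3 by (auto simp: algebra_simps)
  qed (use first_ray last_ray in auto)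
qed

lemma segment_in_polygonal_line:
  assumes "l \<in> {1..<2 * m}" "u \<in> {0..1}"
  shows "(\<xi> l + u * (\<xi> (Suc l) - \<xi> l), \<eta> l + u * (\<eta> (Suc l) - \<eta> l)) \<in> P"
proof -
  have "(\<xi> l + u * (\<xi> (Suc l) - \<xi> l), \<eta> l + u * (\<eta> (Suc l) - \<eta> l))
      \<in> closed_segment (\<xi> l, \<eta> l) (\<xi> (Suc l), \<eta> (Suc l))"
    unfolding closed_segment_def using assms(2) by (auto intro!: exI[of _ u] simp: algebra_simps)
  then show ?thesis
    unfolding polygonal_line_def using assms(1) by blast
qed

lemma segment_bounds:
  assumes "l \<in> {1..<2 * m}" "u \<in> {0..1}"
  shows "\<xi> l \<le> \<xi> l + u * (\<xi> (Suc l) - \<xi> l)" "\<xi> l + u * (\<xi> (Suc l) - \<xi> l) \<le> \<xi> (Suc l)"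
    and "\<eta> l \<le> \<eta> l + u * (\<eta> (Suc l) - \<eta> l)" "\<eta> l + u * (\<eta> (Suc l) - \<eta> l) \<le> \<eta> (Suc l)"
  using assms xi_Suc_ge[of l] eta_Suc_ge[of l]
    mult_left_le_one_le[of "\<xi> (Suc l) - \<xi> l" u] mult_left_le_one_le[of "\<eta> (Suc l) - \<eta> l" u]
  by auto

lemma abscissa_below_first:
  assumes "(a, b) \<in> P" "b < \<eta> 1"
  shows "a = \<xi> 1"
  using assms(1)
proof (cases rule: polygonal_line_cases)
  case last_ray
  then show ?thesis
    using eta_mono[of 1 "2 * m"] m_pos assms(2) by auto
next
  case (segment l u)
  then show ?thesis
    using eta_mono[of 1 l] segment_bounds(3)[of l u] assms(2) by auto
qed

lemma abscissa_above_last: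
  assumes "(a, b) \<in> P" "\<eta> (2 * m) < b"
  shows "a = \<xi> (2 * m)"
  using assms(1)
proof (cases rule: polygonal_line_cases)
  case first_ray
  then show ?thesis
    using eta_mono[of 1 "2 * m"] m_pos assms(2) by auto
next
  case (segment l u)
  then show ?thesis
    using eta_mono[of "Suc l" "2 * m"] segment_bounds(4)[of l u] assms(2) by auto
qed

lemma abscissa_on_vertical:
  assumes "(a, b) \<in> P" "even j" "j \<in> {1..<2 * m}" "\<eta> j < b" "b < \<eta> (Suc j)"
  shows "a = \<xi> j"
  using assms(1)
proof (cases rule: polygonal_line_cases)
  case first_ray
  then show ?thesis
    using eta_mono[of 1 j] assms by auto
next
  case last_ray
  then show ?thesis
    using eta_mono[of "Suc j" "2 * m"] assms by auto
next
  case (segment l u)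
  consider "l < j" | "l = j" | "j < l"
    by linarith
  then show ?thesis
  proof cases
    case 1
    then show ?thesis
      using eta_mono[of "Suc l" j] segment_bounds(4)[of l u] segment assms by auto
  next
    case 2
    then show ?thesis
      using dxi_even[of j] segment assms by auto
  next
    case 3
    then show ?thesis
      using eta_mono[of "Suc j" l] segment_bounds(3)[of l u] segment assms by auto
  qed
qed

lemma odd_segment_at_ends:
  assumes "odd l" "l < 2 * m" "a = \<xi> l + u * (\<xi> (Suc l) - \<xi> l)"
  shows "a = \<xi> l \<Longrightarrow> u = 0" and "a = \<xi> (Suc l) \<Longrightarrow> u = 1"
proof -
  have pos: "\<xi> (Suc l) - \<xi> l > 0"
    using dxi_odd[of l] assms(1,2) by (auto elim!: oddE)
  show "a = \<xi> l \<Longrightarrow> u = 0"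
    using pos assms(3) by simp
  assume "a = \<xi> (Suc l)"
  then have "(1 - u) * (\<xi> (Suc l) - \<xi> l) = 0"
    using assms(3) by (simp add: algebra_simps)
  with pos show "u = 1"
    by simp
qed

lemma ordinate_at_first:
  assumes "(\<xi> 1, b) \<in> P"
  shows "b \<le> \<eta> 1"
  using assms
proof (cases rule: polygonal_line_cases)
  case last_ray
  then show ?thesis
    using xi_less[of 1 "2 * m"] m_pos by auto
next
  case (segment l u)
  show ?thesis
  proof (cases "l = 1")
    case True
    then have "u = 0"
      using odd_segment_at_ends(1)[OF _ _ segment(3)] m_pos by auto
    then show ?thesis
      using segment True by simp
  next
    case False
    then show ?thesis
      using xi_less[of 1 l] segment_bounds(1)[of l u] segment by auto
  qed
qed

lemma ordinate_at_last:
  assumes "(\<xi> (2 * m), b) \<in> P"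
  shows "\<eta> (2 * m) \<le> b"
  using assms
proof (cases rule: polygonal_line_cases)
  case first_ray
  then show ?thesis
    using xi_less[of 1 "2 * m"] m_pos by auto
next
  case (segment l u)
  show ?thesis
  proof (cases "Suc l = 2 * m")
    case True
    then have "odd l"
      by (metis dvd_triv_left even_Suc)
    then have "u = 1"
      using odd_segment_at_ends(2)[OF _ _ segment(3)] True by auto
    then show ?thesis
      using segment True by simp
  next
    case False
    then have "odd (2 * m - 1)" "Suc l \<le> 2 * m - 1"
      using segment m_pos by auto
    then show ?thesis
      using xi_less[of "2 * m - 1" "2 * m"] xi_mono[of "Suc l" "2 * m - 1"] segment_bounds(2)[of l u]
        segment m_pos by auto
  qed
qed

lemma ordinate_at_vertical:
  assumes "(\<xi> j, b) \<in> P" "even j" "j \<in> {1..<2 * m}"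
  shows "\<eta> j \<le> b \<and> b \<le> \<eta> (Suc j)"
proof -
  have "2 \<le> j" "odd (j - 1)" "Suc j < 2 * m"
    using assms(2,3) by (auto elim!: evenE)
  from assms(1) show ?thesis
  proof (cases rule: polygonal_line_cases)
    case first_ray
    then show ?thesis
      using xi_less[of 1 j] \<open>2 \<le> j\<close> assms(3) by auto
  next
    case last_ray
    then show ?thesis
      using xi_less[of "Suc j" "2 * m"] dxi_even[of j] \<open>Suc j < 2 * m\<close> assms by auto
  next
    case (segment l u)
    consider "Suc l < j" | "Suc l = j" | "l = j" | "l = Suc j" | "Suc j < l"
      by linarith
    then show ?thesis
    proof cases
      case 1
      have "\<xi> (j - 1) < \<xi> j"
        by (rule xi_less) (use \<open>2 \<le> j\<close> \<open>odd (j - 1)\<close> assms(3) in auto)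
      moreover have "\<xi> (Suc l) \<le> \<xi> (j - 1)"
        by (rule xi_mono) (use 1 assms(3) in auto)
      ultimately show ?thesis
        using segment_bounds(2)[OF segment(1,2)] segment(3) by linarith
    next
      case 2
      then have "u = 1"
        using odd_segment_at_ends(2)[OF _ _ segment(3)] assms(2,3) by auto
      then show ?thesis
        using segment 2 eta_Suc_ge[of j] assms(3) by auto
    next
      case 3
      then show ?thesis
        using segment_bounds(3,4)[of l u] segment by auto
    next
      case 4
      then have "u = 0"
        using odd_segment_at_ends(1)[OF _ _ segment(3)] dxi_even[of j] \<open>2 \<le> j\<close> \<open>Suc j < 2 * m\<close> assms(2)
        by auto
      then show ?thesis
        using segment 4 eta_Suc_ge[of j] assms(3) by auto
    next
      case 5
      then show ?thesis
        using xi_less[of "Suc j" l] segment_bounds(1)[of l u] segment dxi_even[of j] assms(2,3)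
        by auto
    qed
  qed
qed

lemma polygonal_line_over_open_segment:
  assumes "(a, b) \<in> P" "odd l" "l < 2 * m" "\<xi> l < a" "a < \<xi> (Suc l)"
  obtains u where "a = \<xi> l + u * (\<xi> (Suc l) - \<xi> l)" "b = \<eta> l + u * (\<eta> (Suc l) - \<eta> l)"
  using assms(1)
proof (cases rule: polygonal_line_cases)
  case first_ray
  then show ?thesis
    using xi_mono[of 1 l] assms by (auto elim!: oddE)
next
  case last_ray
  then show ?thesis
    using xi_mono[of "Suc l" "2 * m"] assms by auto
next
  case (segment l' u)
  have "l' = l"
  proof (rule ccontr)
    assume "l' \<noteq> l"
    then consider "l' < l" | "l < l'"
      by linarith
    then show False
    proof cases
      case 1
      then show False
        using xi_mono[of "Suc l'" l] segment_bounds(2)[of l' u] segment assms(3,4) by auto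
    next
      case 2
      then show False
        using xi_mono[of "Suc l" l'] segment_bounds(1)[of l' u] segment assms(5) by auto
    qed
  qed
  then show ?thesis
    using segment that by blast
qed

lemma vertical_abscissae_cases:
  assumes "a \<in> vertical_abscissae \<xi> m"
  obtains "a = \<xi> 1" | "a = \<xi> (2 * m)" | j where "even j" "j \<in> {1..<2 * m}" "a = \<xi> j"
  using assms dxi_odd unfolding vertical_abscissae_def by fastforce

lemma odd_segment_ends_vertical:
  assumes "odd l" "l < 2 * m"
  shows "\<xi> l \<in> vertical_abscissae \<xi> m" "\<xi> (Suc l) \<in> vertical_abscissae \<xi> m"
proof -
  show "\<xi> l \<in> vertical_abscissae \<xi> m"
  proof (cases "l = 1")
    case False
    with assms obtain k where "l = Suc k" "even k" "1 \<le> k"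
      by (metis Suc_pred even_Suc odd_pos One_nat_def Suc_leI neq0_conv)
    then show ?thesis
      using dxi_even[of k] assms unfolding vertical_abscissae_def by force
  qed (simp add: vertical_abscissae_def)
  show "\<xi> (Suc l) \<in> vertical_abscissae \<xi> m"
  proof (cases "Suc l = 2 * m")
    case False
    then have "Suc l < 2 * m"
      using assms by linarith
    then show ?thesis
      using dxi_even[of "Suc l"] assms unfolding vertical_abscissae_def by force
  qed (simp add: vertical_abscissae_def)
qed

lemma locally_orthogonal_open_segment:
  assumes "(a, b) \<in> P" "odd l" "l < 2 * m" "\<xi> l < a" "a < \<xi> (Suc l)"
    and g: "g = (\<eta> (Suc l) - \<eta> l) / ((\<xi> (Suc l) - \<xi> l) + (\<eta> (Suc l) - \<eta> l))"
  shows "locally_orthogonal P (g, g - 1) (a, b)"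
proof -
  define D E where "D = \<xi> (Suc l) - \<xi> l" and "E = \<eta> (Suc l) - \<eta> l"
  have "D > 0" "E \<ge> 0"
    using dxi_odd[of l] deta_odd[of l] assms(2,3) unfolding D_def E_def by (auto elim!: oddE)
  then have normal: "g * D + (g - 1) * E = 0"
    unfolding g D_def[symmetric] E_def[symmetric] by (simp add: field_simps)
  obtain u where u: "a = \<xi> l + u * D" "b = \<eta> l + u * E"
    using polygonal_line_over_open_segment[OF assms(1-5)] unfolding D_def E_def by blast
  define r where "r = min (a - \<xi> l) (\<xi> (Suc l) - a)"
  have "(g, g - 1) \<bullet> (z - (a, b)) = 0" if zP: "z \<in> P" and near: "dist z (a, b) < r" for z
  proof -
    obtain a' b' where z: "z = (a', b')"
      by (cases z)
    have "\<bar>a' - a\<bar> < r"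
      using dist_fst_le[of z "(a, b)"] near by (simp add: z dist_real_def)
    then have "\<xi> l < a'" "a' < \<xi> (Suc l)"
      unfolding r_def by auto
    then obtain u' where "a' = \<xi> l + u' * D" "b' = \<eta> l + u' * E"
      using polygonal_line_over_open_segment[of a' b' l] zP assms(2,3)
      unfolding z D_def E_def by blast
    then have "(g, g - 1) \<bullet> (z - (a, b)) = (u' - u) * (g * D + (g - 1) * E)"
      by (simp add: z u algebra_simps)
    then show ?thesis
      by (simp add: normal)
  qed
  moreover have "r > 0"
    using assms(4,5) by (simp add: r_def)
  ultimately show ?thesis
    unfolding locally_orthogonal_def using assms(1) by blast
qed

lemma closure_locally_orthogonal_at_vertical_abscissa:
  assumes "(a, b) \<in> P" "a \<in> vertical_abscissae \<xi> m"
  shows "(a, b) \<in> closure {p. locally_orthogonal P (1, 0) p}"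
  using assms(2)
proof (cases rule: vertical_abscissae_cases)
  case 1
  show ?thesis
    unfolding 1
  proof (rule closure_locally_orthogonal_vertical[where I = "{..<\<eta> 1}"])
    show "(\<xi> 1, b') \<in> P" if "b' \<in> {..<\<eta> 1}" for b'
      using that unfolding polygonal_line_def by auto
    show "b \<in> closure {..<\<eta> 1}"
      using ordinate_at_first assms(1) 1 by simp
  qed (use abscissa_below_first in auto)
next
  case 2
  show ?thesis
    unfolding 2
  proof (rule closure_locally_orthogonal_vertical[where I = "{\<eta> (2 * m)<..}"])
    show "(\<xi> (2 * m), b') \<in> P" if "b' \<in> {\<eta> (2 * m)<..}" for b'
      using that unfolding polygonal_line_def by auto
    show "b \<in> closure {\<eta> (2 * m)<..}"
      using ordinate_at_last assms(1) 2 by simp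
  qed (use abscissa_above_last in auto)
next
  case (3 j)
  have "\<eta> j < \<eta> (Suc j)"
    using deta_even[of j] 3 by simp
  show ?thesis
    unfolding 3
  proof (rule closure_locally_orthogonal_vertical[where I = "{\<eta> j<..<\<eta> (Suc j)}"])
    show "(\<xi> j, b') \<in> P" if "b' \<in> {\<eta> j<..<\<eta> (Suc j)}" for b'
    proof -
      define u where "u = (b' - \<eta> j) / (\<eta> (Suc j) - \<eta> j)"
      have "u \<in> {0..1}"
        using that \<open>\<eta> j < \<eta> (Suc j)\<close> by (auto simp: u_def divide_le_eq_1)
      then have "(\<xi> j + u * (\<xi> (Suc j) - \<xi> j), \<eta> j + u * (\<eta> (Suc j) - \<eta> j)) \<in> P"
        using 3 by (intro segment_in_polygonal_line) auto
      then show ?thesis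
        using dxi_even[of j] 3 \<open>\<eta> j < \<eta> (Suc j)\<close> by (simp add: u_def)
    qed
    show "b \<in> closure {\<eta> j<..<\<eta> (Suc j)}"
      using ordinate_at_vertical[of j b] assms(1) 3 \<open>\<eta> j < \<eta> (Suc j)\<close> by simp
  qed (use 3 in \<open>auto intro: abscissa_on_vertical\<close>)
qed

lemma polygonal_line_normal_approximation:
  assumes "(a, b) \<in> P"
    and vertical: "a \<in> vertical_abscissae \<xi> m \<Longrightarrow> g = 1"
    and slope: "\<And>j. j \<in> {1..2 * m} \<Longrightarrow> odd j \<Longrightarrow>
      a \<in> {\<xi> j..\<xi> (Suc j)} - vertical_abscissae \<xi> m \<Longrightarrow>
      g = (\<eta> (Suc j) - \<eta> j) / ((\<xi> (Suc j) - \<xi> j) + (\<eta> (Suc j) - \<eta> j))"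
  shows "g \<in> {0..1} \<and> (a, b) \<in> closure {p. locally_orthogonal P (g, g - 1) p}"
proof (cases "a \<in> vertical_abscissae \<xi> m")
  case True
  then show ?thesis
    using closure_locally_orthogonal_at_vertical_abscissa[OF assms(1)] vertical by simp
next
  case False
  from assms(1) show ?thesis
  proof (cases rule: polygonal_line_cases)
    case (segment l u)
    have "odd l"
    proof (rule ccontr)
      assume "\<not> odd l"
      then have "\<xi> (Suc l) - \<xi> l = 0"
        using dxi_even[of l] segment(1) by blast
      then have "a = \<xi> l" "\<xi> l \<in> vertical_abscissae \<xi> m"
        using segment(1,3) unfolding vertical_abscissae_def by auto
      then show False
        using False by blast
    qed
    have "\<xi> l \<noteq> a" "a \<noteq> \<xi> (Suc l)"
      using False odd_segment_ends_vertical[OF \<open>odd l\<close>] segment(1) by auto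
    then have "\<xi> l < a" "a < \<xi> (Suc l)"
      using segment_bounds(1,2)[OF segment(1,2)] segment(3) by linarith+
    then have g: "g = (\<eta> (Suc l) - \<eta> l) / ((\<xi> (Suc l) - \<xi> l) + (\<eta> (Suc l) - \<eta> l))"
      using segment(1) \<open>odd l\<close> False by (intro slope) auto
    have "\<xi> (Suc l) - \<xi> l > 0" "\<eta> (Suc l) - \<eta> l \<ge> 0"
      using dxi_odd[of l] deta_odd[of l] segment(1) \<open>odd l\<close> by auto
    then have "g \<in> {0..1}"
      unfolding g by (auto simp: divide_le_eq_1)
    moreover have "locally_orthogonal P (g, g - 1) (a, b)"
      using segment(1) \<open>odd l\<close> \<open>\<xi> l < a\<close> \<open>a < \<xi> (Suc l)\<close> g
      by (intro locally_orthogonal_open_segment assms(1)) auto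
    ultimately show ?thesis
      using closure_subset[of "{p. locally_orthogonal P (g, g - 1) p}"] by blast
  qed (use False in \<open>simp_all add: vertical_abscissae_def\<close>)
qed

end

theorem proposition6p1:
  fixes q :: "'n::finite \<Rightarrow> real \<Rightarrow> ereal"
    and \<xi> \<eta> :: "'n \<Rightarrow> nat \<Rightarrow> real"
    and m :: "'n \<Rightarrow> nat"
    and x xs :: "real^'n"
    and A :: "'n \<Rightarrow> real set"
    and G :: "real^'n^'n"
  assumes proper: "\<And>i. proper_fun (q i)"
    and convex: "\<And>i. convex_fun (q i)"
    and lsc: "\<And>i. lsc_fun (q i)"
    and m_pos: "\<And>i. 1 \<le> m i"
    and gph_qi: "\<And>i. gph_subdiff (q i) = polygonal_line (\<xi> i) (\<eta> i) (m i)"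
    and dxi_odd: "\<And>i j. j \<in> {1..<2 * m i} \<Longrightarrow> odd j \<Longrightarrow> \<xi> i (Suc j) - \<xi> i j > 0"
    and dxi_even: "\<And>i j. j \<in> {1..<2 * m i} \<Longrightarrow> even j \<Longrightarrow> \<xi> i (Suc j) - \<xi> i j = 0"
    and deta_odd: "\<And>i j. j \<in> {1..<2 * m i} \<Longrightarrow> odd j \<Longrightarrow> \<eta> i (Suc j) - \<eta> i j \<ge> 0"
    and deta_even: "\<And>i j. j \<in> {1..<2 * m i} \<Longrightarrow> even j \<Longrightarrow> \<eta> i (Suc j) - \<eta> i j > 0"
    and in_gph: "(x, xs) \<in> gph_subdiff (\<lambda>y. \<Sum>i\<in>UNIV. q i (y $ i))"
    and A_def: "\<And>i. A i = {\<xi> i 1, \<xi> i (2 * m i)} \<union>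
                   {\<xi> i j | j. j \<in> {1..<2 * m i} \<and> \<xi> i (Suc j) - \<xi> i j = 0}"
    and G_offdiag: "\<And>i k. i \<noteq> k \<Longrightarrow> G $ i $ k = 0"
    and G_A: "\<And>i. x $ i \<in> A i \<Longrightarrow> G $ i $ i = 1"
    and G_seg: "\<And>i j. j \<in> {1..2 * m i} \<Longrightarrow> odd j \<Longrightarrow>
                 x $ i \<in> {\<xi> i j .. \<xi> i (Suc j)} - A i \<Longrightarrow>
                 G $ i $ i = (\<eta> i (Suc j) - \<eta> i j) /
                             ((\<xi> i (Suc j) - \<xi> i j) + (\<eta> i (Suc j) - \<eta> i j))"
  shows "psd_matrix G \<and> spectral_norm G \<le> 1 \<and>
         {((mat 1 - G) *v v, G *v v) | v. True} \<subseteq>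
           gph_coderivative (gph_subdiff (\<lambda>y. \<Sum>i\<in>UNIV. q i (y $ i))) x xs"
proof -
  have staircase: "staircase (\<xi> i) (\<eta> i) (m i)" for i
    unfolding staircase_def using m_pos dxi_odd dxi_even deta_odd deta_even by blast
  have "q i t \<noteq> -\<infinity>" for i t
    using proper unfolding proper_fun_def by blast
  then have gph: "gph_subdiff (\<lambda>y. \<Sum>i\<in>UNIV. q i (y $ i))
      = {(y, s). \<forall>i. (y $ i, s $ i) \<in> polygonal_line (\<xi> i) (\<eta> i) (m i)}"
    by (simp add: gph_subdiff_separable_sum gph_qi)
  have approx: "G $ i $ i \<in> {0..1} \<and>
      (x $ i, xs $ i) \<in> closure {p. locally_orthogonal (polygonal_line (\<xi> i) (\<eta> i) (m i)) (G $ i $ i, G $ i $ i - 1) p}"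
    for i
  proof (rule staircase.polygonal_line_normal_approximation[OF staircase])
    show "(x $ i, xs $ i) \<in> polygonal_line (\<xi> i) (\<eta> i) (m i)"
      using in_gph unfolding gph by blast
  qed (use G_A G_seg in \<open>simp_all add: A_def vertical_abscissae_def\<close>)
  then have "0 \<le> G $ i $ i" "\<bar>G $ i $ i\<bar> \<le> 1" for i
    by auto
  show ?thesis
  proof (intro conjI)
    show "psd_matrix G"
      by (rule psd_matrix_diagonal) (simp_all add: G_offdiag \<open>\<And>i. 0 \<le> G $ i $ i\<close>)
    show "spectral_norm G \<le> 1"
      by (rule spectral_norm_diagonal_le) (simp_all add: G_offdiag \<open>\<And>i. \<bar>G $ i $ i\<bar> \<le> 1\<close>)
    have "((mat 1 - G) *v v, G *v v)
        \<in> gph_coderivative {(y, s). \<forall>i. (y $ i, s $ i) \<in> polygonal_line (\<xi> i) (\<eta> i) (m i)} x xs" for v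
      by (rule diagonal_pairs_in_gph_coderivative) (use G_offdiag approx in auto)
    then show "{((mat 1 - G) *v v, G *v v) | v. True}
        \<subseteq> gph_coderivative (gph_subdiff (\<lambda>y. \<Sum>i\<in>UNIV. q i (y $ i))) x xs"
      unfolding gph by blast
  qed
qed

end
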